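(* Let $P$ be an integer and $m\ge 0$ an integer. Consider the equation $$\sigma_2(n)-n^2=V_{2m}(P,-1)\,n-U_{2m}(P,-1)^2+1$$ in positive integers $n$. Then every solution $n$ with $n>\big(|V_{2m}(P,-1)|+U_{2m}(P,-1)^2-1\big)^3$ is of one of the following forms (so all solutions not of these forms lie in the finite, computable range $n\le(|V_{2m}(P,-1)|+U_{2m}(P,-1)^2-1)^3$): (1) $n=U_{2k+1}(P,-1)\,U_{2k+2m+1}(P,-1)$ for some integer $k\ge 0$, with $U_{2k+1}(P,-1)$ and $U_{2k+2m+1}(P,-1)$ both prime; (2) $n=U_{2k+1}(P,-1)\,U_{2m-2k-1}(P,-1)$ for some integer $k$ with $0\le k\le m-1$ and $m\ne 2k+1$, with $U_{2k+1}(P,-1)$ and $U_{2m-2k-1}(P,-1)$ both prime.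
   Context: For a positive integer $n$ and $k\ge 0$, $\sigma_k(n)=\sum_{d\mid n,\ d>0} d^k$. For integers $P,Q$, the Lucas sequences are defined for $j\ge 0$ by $U_0(P,Q)=0$, $U_1(P,Q)=1$, $U_j(P,Q)=P\,U_{j-1}(P,Q)-Q\,U_{j-2}(P,Q)$ for $j>1$, and $V_0(P,Q)=2$, $V_1(P,Q)=P$, $V_j(P,Q)=P\,V_{j-1}(P,Q)-Q\,V_{j-2}(P,Q)$ for $j>1$. *)

theory Defs
  imports "HOL-Computational_Algebra.Primes"
begin

definition divisor_sigma :: "nat \<Rightarrow> nat \<Rightarrow> nat" where
  "divisor_sigma k n = (\<Sum>d\<in>{d. d dvd n}. d ^ k)"

fun lucasU :: "int \<Rightarrow> int \<Rightarrow> nat \<Rightarrow> int" where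
  "lucasU P Q 0 = 0"
| "lucasU P Q (Suc 0) = 1"
| "lucasU P Q (Suc (Suc j)) = P * lucasU P Q (Suc j) - Q * lucasU P Q j"

fun lucasV :: "int \<Rightarrow> int \<Rightarrow> nat \<Rightarrow> int" where
  "lucasV P Q 0 = 2"
| "lucasV P Q (Suc 0) = P"
| "lucasV P Q (Suc (Suc j)) = P * lucasV P Q (Suc j) - Q * lucasV P Q j"

end

(*
  Write V = V_2m(P,-1), U = U_2m(P,-1) and D = P^2 + 4, so that V^2 - D U^2 = 4.  Replacing P
  by |P| changes neither V, U^2 nor any odd-index U_j, so we may take P >= 0, and then V >= 2.
  For a solution n beyond the cube bound, comparing sigma_2(n) with the contributions of the
  divisors 1, p, n/p, n, where p is the least prime factor of n, forces n = p q with primes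
  p < q, and the equation becomes p^2 + q^2 = V p q - U^2.  Completing the square gives
  (2q - V p)^2 = U^2 (D p^2 - 4), so z^2 - D p^2 = -4 for some integer z.  A descent inverting
  one step of the Lucas recurrence shows that every nonnegative solution of z^2 - D x^2 = +-4
  is a pair (V_j, U_j); the sign -4 makes j odd, p = U_j, and the addition formulas for Lucas
  sequences give q = U_(j+2m) or q = U_|j-2m|.
*)

theory Submission
  imports Defs
begin

lemma sum_power_le_divisor_sigma:
  assumes "0 < n" "A \<subseteq> {d. d dvd n}"
  shows "(\<Sum>d\<in>A. d ^ k) \<le> divisor_sigma k n"
  unfolding divisor_sigma_def using assms by (intro sum_mono2) auto

lemma divisor_sigma_ge_divisor:
  assumes "d dvd n" "1 < d" "d < n"
  shows "1 + d ^ k + n ^ k \<le> divisor_sigma k n"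
proof -
  have "(\<Sum>x\<in>{1, d, n}. x ^ k) \<le> divisor_sigma k n"
    using assms by (intro sum_power_le_divisor_sigma) auto
  then show ?thesis
    using assms(2,3) by simp
qed

lemma divisor_sigma_ge_two_divisors:
  assumes "d dvd n" "e dvd n" "1 < d" "d < e" "e < n"
  shows "1 + d ^ k + e ^ k + n ^ k \<le> divisor_sigma k n"
proof -
  have "(\<Sum>x\<in>{1, d, e, n}. x ^ k) \<le> divisor_sigma k n"
    using assms by (intro sum_power_le_divisor_sigma) auto
  then show ?thesis
    using assms(3-5) by (simp add: add.assoc)
qed

lemma divisors_prime_mult:
  fixes p q :: nat
  assumes "prime p" "prime q"
  shows "{d. d dvd p * q} = {1, p, q, p * q}"
proof
  show "{d. d dvd p * q} \<subseteq> {1, p, q, p * q}"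
  proof
    fix d
    assume "d \<in> {d. d dvd p * q}"
    then have "d dvd p * q"
      by simp
    then obtain r s where "d = r * s" "r dvd p" "s dvd q"
      using division_decomp by blast
    moreover have "r = 1 \<or> r = p" "s = 1 \<or> s = q"
      using \<open>r dvd p\<close> \<open>s dvd q\<close> assms by (auto simp: prime_nat_iff)
    ultimately show "d \<in> {1, p, q, p * q}"
      by auto
  qed
qed auto

lemma divisor_sigma_prime:
  assumes "prime p"
  shows "divisor_sigma k p = 1 + p ^ k"
proof -
  have "{d. d dvd p} = {1, p}"
    using assms by (auto simp: prime_nat_iff)
  then show ?thesis
    using prime_gt_1_nat[OF assms] by (simp add: divisor_sigma_def)
qed

lemma divisor_sigma_prime_mult:
  assumes "prime p" "prime q" "p \<noteq> q"
  shows "divisor_sigma k (p * q) = 1 + p ^ k + q ^ k + (p * q) ^ k"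
proof -
  have "1 < p" "1 < q"
    using assms(1,2) by (blast intro: prime_gt_1_nat)+
  then have "p < p * q" "q < p * q"
    by simp_all
  then show ?thesis
    using \<open>1 < p\<close> \<open>p \<noteq> q\<close>
    by (simp add: divisor_sigma_def divisors_prime_mult[OF assms(1,2)] algebra_simps)
qed

lemma divisor_sigma_prime_square:
  assumes "prime p"
  shows "divisor_sigma k (p * p) = 1 + p ^ k + (p * p) ^ k"
proof -
  have "1 < p"
    using assms by (rule prime_gt_1_nat)
  then have "p < p * p"
    by simp
  then show ?thesis
    using \<open>1 < p\<close> by (simp add: divisor_sigma_def divisors_prime_mult[OF assms assms] algebra_simps)
qed

lemma least_prime_factor:
  fixes n :: nat
  assumes "2 \<le> n"
  obtains p where "prime p" "p dvd n" "\<And>d. 1 < d \<Longrightarrow> d dvd n \<Longrightarrow> p \<le> d"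
proof -
  define p where "p = (LEAST p. prime p \<and> p dvd n)"
  have "\<exists>p. prime p \<and> p dvd n"
    using assms by (intro prime_factor_nat) simp
  then have p: "prime p \<and> p dvd n"
    unfolding p_def by (rule LeastI_ex)
  have "p \<le> d" if "1 < d" "d dvd n" for d
  proof -
    obtain r where "prime r" "r dvd d"
      using \<open>1 < d\<close> prime_factor_nat[of d] by auto
    then have "p \<le> r"
      unfolding p_def using \<open>d dvd n\<close> by (blast intro: Least_le dvd_trans)
    also have "r \<le> d"
      using \<open>r dvd d\<close> \<open>1 < d\<close> by (simp add: dvd_imp_le)
    finally show ?thesis .
  qed
  then show thesis
    using p that by blast
qed

lemma prime_if_no_divisor_below:
  fixes p q :: nat
  assumes "1 < q" "\<And>d. 1 < d \<Longrightarrow> d dvd q \<Longrightarrow> p \<le> d" "q < p ^ 2"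
  shows "prime q"
proof (rule ccontr)
  assume "\<not> prime q"
  then obtain c where "c dvd q" "c \<noteq> 1" "c \<noteq> q"
    using assms(1) by (auto simp: prime_nat_iff)
  then obtain e where q: "q = c * e"
    by blast
  moreover have "0 < c * e"
    using q assms(1) by linarith
  moreover have "e \<noteq> 1"
    using q \<open>c \<noteq> q\<close> by auto
  ultimately have "1 < c" "1 < e"
    using \<open>c \<noteq> 1\<close> by (auto simp: nat_neq_iff)
  then have "p \<le> c" "p \<le> e"
    using assms(2) q by auto
  then have "p ^ 2 \<le> q"
    unfolding q power2_eq_square by (rule mult_mono) simp_all
  then show False
    using assms(3) by simp
qed

lemma divisor_sigma_2_mult_gt:
  assumes "1 < p" "p < q"
  shows "(p * q + 1) ^ 2 < divisor_sigma 2 (p * q)"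
proof -
  have "0 < (int q - int p) ^ 2"
    using assms(2) by simp
  then have "int (p * q + p * q) < int (p ^ 2 + q ^ 2)"
    by (simp add: power2_eq_square algebra_simps)
  then have "p * q + p * q < p ^ 2 + q ^ 2"
    by (simp only: of_nat_less_iff)
  moreover have "1 + p ^ 2 + q ^ 2 + (p * q) ^ 2 \<le> divisor_sigma 2 (p * q)"
    using assms by (intro divisor_sigma_ge_two_divisors) auto
  ultimately show ?thesis
    by (simp add: power2_eq_square algebra_simps)
qed

lemma cofactor_le_of_divisor_sigma_2_eq:
  fixes v u :: int
  assumes sigma: "int (divisor_sigma 2 (p * q)) = int (p * q) ^ 2 + v * int (p * q) - u ^ 2 + 1"
    and "1 < p" "1 < q"
  shows "int q \<le> v * int p"
proof -
  have "1 + q ^ 2 + (p * q) ^ 2 \<le> divisor_sigma 2 (p * q)"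
    using assms(2,3) by (intro divisor_sigma_ge_divisor) auto
  then have "int (1 + q ^ 2 + (p * q) ^ 2) \<le> int (divisor_sigma 2 (p * q))"
    by (simp only: of_nat_le_iff)
  then have "int q ^ 2 \<le> v * int (p * q) - u ^ 2"
    using sigma unfolding of_nat_add of_nat_power of_nat_1 by linarith
  also have "\<dots> \<le> (v * int p) * int q"
    by simp
  finally have "int q * int q \<le> (v * int p) * int q"
    by (simp add: power2_eq_square)
  then show ?thesis
    using \<open>1 < q\<close> by simp
qed

lemma factor_gt_of_cube_lt:
  fixes T p q :: int
  assumes "1 \<le> T" "T ^ 3 < p * q" "0 < p" "q \<le> T * p"
  shows "T < p" "q < p ^ 2"
proof -
  have "p * q \<le> p * (T * p)"
    using assms(3,4) by simp
  then have "T * T ^ 2 < T * p ^ 2"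
    using assms(2) by (simp add: power2_eq_square power3_eq_cube algebra_simps)
  then show "T < p"
    using assms(1,3) power_less_imp_less_base[of T 2 p] by simp
  then show "q < p ^ 2"
    using assms(3,4) by (simp add: power2_eq_square order_le_less_trans)
qed

lemma not_prime_of_divisor_sigma_2_eq:
  fixes v u :: int
  assumes "2 \<le> v" "u ^ 2 < int n"
    and sigma: "int (divisor_sigma 2 n) = int n ^ 2 + v * int n - u ^ 2 + 1"
  shows "\<not> prime n"
proof
  assume "prime n"
  then have "v * int n = u ^ 2"
    using sigma by (simp add: divisor_sigma_prime)
  moreover have "1 * int n \<le> v * int n"
    using assms(1) by (intro mult_right_mono) simp_all
  ultimately show False
    using assms(2) by linarith
qed

lemma least_prime_factor_of_divisor_sigma_2_eq:
  fixes n :: nat and v u :: int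
  assumes v: "2 \<le> v" and u0: "u = 0 \<Longrightarrow> v = 2"
    and sigma: "int (divisor_sigma 2 n) = int n ^ 2 + v * int n - u ^ 2 + 1"
    and large: "(v + u ^ 2 - 1) ^ 3 < int n"
  obtains p q where "prime p" "n = p * q" "1 < q" "\<And>d. 1 < d \<Longrightarrow> d dvd n \<Longrightarrow> p \<le> d"
    "q < p ^ 2" "u ^ 2 < int p"
proof -
  define T where "T = v + u ^ 2 - 1"
  have "1 \<le> T" "u ^ 2 < T" "T ^ 3 < int n"
    unfolding T_def using v zero_le_power2[of u] large by linarith+
  then have "T < int n"
    using power_increasing[of 1 3 T] by simp
  have "\<not> prime n"
    using not_prime_of_divisor_sigma_2_eq[OF v _ sigma] \<open>u ^ 2 < T\<close> \<open>T < int n\<close> by linarith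
  have "2 \<le> n"
    using \<open>1 \<le> T\<close> \<open>T < int n\<close> by linarith
  then obtain p where p: "prime p" "p dvd n" and least: "\<And>d. 1 < d \<Longrightarrow> d dvd n \<Longrightarrow> p \<le> d"
    using least_prime_factor by blast
  then obtain q where n: "n = p * q"
    by blast
  have "1 < p"
    using p(1) by (rule prime_gt_1_nat)
  have "q \<noteq> 0" "q \<noteq> 1"
    using n \<open>2 \<le> n\<close> \<open>\<not> prime n\<close> p(1) by auto
  then have "1 < q"
    by simp
  have q_le: "int q \<le> v * int p"
    using sigma \<open>1 < p\<close> \<open>1 < q\<close> unfolding n by (rule cofactor_le_of_divisor_sigma_2_eq)
  have "q < p ^ 2 \<and> u ^ 2 < int p"
  proof (cases "u = 0")
    case True
    then have "int (divisor_sigma 2 n) = int ((n + 1) ^ 2)"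
      using sigma u0 by (simp add: power2_eq_square algebra_simps)
    then have "divisor_sigma 2 (p * q) = (p * q + 1) ^ 2"
      unfolding n by (simp only: of_nat_eq_iff)
    then have "\<not> p < q"
      using divisor_sigma_2_mult_gt[OF \<open>1 < p\<close>, of q] by auto
    moreover have "p \<le> q"
      using least \<open>1 < q\<close> n by simp
    ultimately show ?thesis
      using True \<open>1 < p\<close> by (simp add: power2_eq_square)
  next
    case False
    then have "v \<le> T"
      by (simp add: T_def)
    then have "int q \<le> T * int p"
      using q_le by (meson mult_right_mono of_nat_0_le_iff order_trans)
    then have "T < int p" "int q < int p ^ 2"
      using factor_gt_of_cube_lt[OF \<open>1 \<le> T\<close>, of "int p" "int q"] \<open>T ^ 3 < int n\<close> n \<open>1 < p\<close>
      by simp_all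
    then show ?thesis
      using \<open>u ^ 2 < T\<close> by (simp flip: of_nat_power)
  qed
  then show thesis
    using that p(1) n \<open>1 < q\<close> least by blast
qed

lemma semiprime_of_divisor_sigma_2_eq:
  fixes n :: nat and v u :: int
  assumes "2 \<le> v" "u = 0 \<Longrightarrow> v = 2"
    and sigma: "int (divisor_sigma 2 n) = int n ^ 2 + v * int n - u ^ 2 + 1"
    and "(v + u ^ 2 - 1) ^ 3 < int n"
  obtains p q where "prime p" "prime q" "p < q" "n = p * q"
proof -
  obtain p q where p: "prime p" and n: "n = p * q" and "1 < q"
    and least: "\<And>d. 1 < d \<Longrightarrow> d dvd n \<Longrightarrow> p \<le> d" and "q < p ^ 2" "u ^ 2 < int p"
    using least_prime_factor_of_divisor_sigma_2_eq[OF assms] by blast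
  have "prime q"
    using \<open>1 < q\<close> \<open>q < p ^ 2\<close> least n by (intro prime_if_no_divisor_below) auto
  have "p \<le> q"
    using least \<open>1 < q\<close> n by simp
  moreover have "p \<noteq> q"
  proof
    assume "p = q"
    then have "(v - 1) * int p ^ 2 = u ^ 2"
      using sigma n divisor_sigma_prime_square[OF p, of 2]
      by (simp add: power2_eq_square algebra_simps)
    moreover have "1 * int p ^ 2 \<le> (v - 1) * int p ^ 2"
      using assms(1) by (intro mult_right_mono) simp_all
    moreover have "int p * 1 \<le> int p ^ 2"
      unfolding power2_eq_square using prime_gt_0_nat[OF p] by (intro mult_left_mono) simp_all
    ultimately show False
      using \<open>u ^ 2 < int p\<close> by linarith
  qed
  ultimately show thesis
    using that p \<open>prime q\<close> n by simp
qed

lemma pell_of_quadratic: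
  fixes v u d a b :: int
  assumes norm: "v ^ 2 - d * u ^ 2 = 4" and "u \<noteq> 0"
    and eq: "a ^ 2 + b ^ 2 = v * a * b - u ^ 2"
  obtains z where "z ^ 2 - d * a ^ 2 = -4" "2 * b = v * a + u * z"
proof -
  define w where "w = 2 * b - v * a"
  have "w ^ 2 = 4 * (a ^ 2 + b ^ 2 - v * a * b) + (v ^ 2 - 4) * a ^ 2"
    unfolding w_def by (simp add: algebra_simps power2_eq_square)
  also have "\<dots> = u ^ 2 * (d * a ^ 2 - 4)"
    using eq norm by (simp add: algebra_simps)
  finally have w2: "w ^ 2 = u ^ 2 * (d * a ^ 2 - 4)" .
  then have "u dvd w"
    by (simp flip: pow_divides_pow_iff[of 2])
  then obtain z where z: "w = u * z" ..
  have "u ^ 2 * z ^ 2 = u ^ 2 * (d * a ^ 2 - 4)"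
    using w2 by (simp add: z power_mult_distrib)
  then have "z ^ 2 - d * a ^ 2 = -4"
    using \<open>u \<noteq> 0\<close> by simp
  moreover have "2 * b = v * a + u * z"
    using z by (simp add: w_def)
  ultimately show thesis
    by (rule that)
qed

lemma pell_solution_bounds:
  fixes P z x :: int
  defines "D \<equiv> P ^ 2 + 4"
  assumes P: "1 \<le> P" and z: "0 \<le> z" and x: "2 \<le> x" and e: "\<bar>z ^ 2 - D * x ^ 2\<bar> \<le> 4"
  shows "P * x \<le> z" "z < (P + 2) * x" "P * z \<le> D * x"
proof -
  have x2: "4 \<le> x ^ 2"
    using power_mono[OF x, of 2] by simp
  have "z ^ 2 - (P * x) ^ 2 = 4 * x ^ 2 + (z ^ 2 - D * x ^ 2)"
    by (simp add: D_def algebra_simps power2_eq_square)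
  then have "(P * x) ^ 2 \<le> z ^ 2"
    using e x2 by linarith
  then show "P * x \<le> z"
    using z power2_le_imp_le by blast
  have "1 * 4 \<le> P * x ^ 2"
    using P x2 by (intro mult_mono) auto
  moreover have "((P + 2) * x) ^ 2 - z ^ 2 = 4 * P * x ^ 2 - (z ^ 2 - D * x ^ 2)"
    by (simp add: D_def algebra_simps power2_eq_square)
  ultimately have "z ^ 2 < ((P + 2) * x) ^ 2"
    using e by linarith
  then show "z < (P + 2) * x"
    using x P power_less_imp_less_base[of z 2 "(P + 2) * x"] by simp
  have "D * 1 \<le> D * x ^ 2"
    using x2 by (intro mult_left_mono) (auto simp: D_def)
  moreover have "P ^ 2 * (z ^ 2 - D * x ^ 2) \<le> P ^ 2 * 4"
    using e by (intro mult_left_mono) auto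
  moreover have "(D * x) ^ 2 - (P * z) ^ 2 = 4 * (D * x ^ 2) - P ^ 2 * (z ^ 2 - D * x ^ 2)"
    by (simp add: D_def algebra_simps power2_eq_square)
  moreover have "P ^ 2 \<le> D"
    by (simp add: D_def)
  ultimately have "(P * z) ^ 2 \<le> (D * x) ^ 2"
    by linarith
  then show "P * z \<le> D * x"
    using x P power2_le_imp_le[of "P * z" "D * x"] by (simp add: D_def)
qed

text \<open>The map \<open>(z, x) \<mapsto> ((D x - P z) / 2, (z - P x) / 2)\<close> inverts the step of
  \<open>lucas_Suc\<close> below.\<close>

lemma pell_step_inverse:
  fixes P z x z' x' :: int
  defines "D \<equiv> P ^ 2 + 4"
  assumes x': "z - P * x = 2 * x'" and z': "D * x - P * z = 2 * z'"
  shows "z' ^ 2 - D * x' ^ 2 = - (z ^ 2 - D * x ^ 2)" "2 * x = P * x' + z'" "2 * z = P * z' + D * x'"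
proof -
  have "4 * (z' ^ 2 - D * x' ^ 2) = (2 * z') ^ 2 - D * (2 * x') ^ 2"
    by (simp add: algebra_simps power2_eq_square)
  also have "\<dots> = 4 * (- (z ^ 2 - D * x ^ 2))"
    unfolding x'[symmetric] z'[symmetric] by (simp add: D_def algebra_simps power2_eq_square)
  finally show "z' ^ 2 - D * x' ^ 2 = - (z ^ 2 - D * x ^ 2)"
    by simp
  have "2 * (P * x' + z') = P * (2 * x') + 2 * z'"
    by (simp add: algebra_simps)
  also have "\<dots> = 2 * (2 * x)"
    unfolding x'[symmetric] z'[symmetric] by (simp add: D_def algebra_simps power2_eq_square)
  finally show "2 * x = P * x' + z'"
    by simp
  have "2 * (P * z' + D * x') = P * (2 * z') + D * (2 * x')"
    by (simp add: algebra_simps)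
  also have "\<dots> = 2 * (2 * z)"
    unfolding x'[symmetric] z'[symmetric] by (simp add: D_def algebra_simps power2_eq_square)
  finally show "2 * z = P * z' + D * x'"
    by simp
qed

lemma pell_descent:
  fixes P z x :: int
  defines "D \<equiv> P ^ 2 + 4"
  assumes P: "1 \<le> P" and z: "0 \<le> z" and x: "2 \<le> x" and e: "z ^ 2 - D * x ^ 2 \<in> {4, -4}"
  obtains x' z' where "0 \<le> x'" "x' < x" "0 \<le> z'" "z' ^ 2 - D * x' ^ 2 = - (z ^ 2 - D * x ^ 2)"
    "2 * x = P * x' + z'" "2 * z = P * z' + D * x'"
proof -
  have "z ^ 2 - (P * x) ^ 2 = 2 * (2 * x ^ 2) + (z ^ 2 - D * x ^ 2)"
    by (simp add: D_def algebra_simps power2_eq_square)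
  moreover have "even (z ^ 2 - D * x ^ 2)"
    using e by (auto simp only: insert_iff empty_iff even_numeral even_minus)
  ultimately have "even (z ^ 2 - (P * x) ^ 2)"
    by (metis dvd_add dvd_triv_left)
  then have "even (z - P * x)"
    by simp
  then obtain x' where x': "z - P * x = 2 * x'" ..
  have "D * x - P * z = 2 * (2 * x - P * x')"
    using x' by (simp add: D_def algebra_simps power2_eq_square)
  then obtain z' where z': "D * x - P * z = 2 * z'" ..
  have "\<bar>z ^ 2 - D * x ^ 2\<bar> \<le> 4"
    using e by auto
  note bounds = pell_solution_bounds[OF P z x this[unfolded D_def], folded D_def]
  show thesis
  proof (rule that)
    show "0 \<le> x'" "x' < x" "0 \<le> z'"
      using bounds x' z' by (simp_all add: algebra_simps)
  qed (use pell_step_inverse[OF x' z'[unfolded D_def], folded D_def] in simp_all)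
qed

lemma sq_eq_sq_add_8:
  fixes P z :: int
  assumes "1 \<le> P" "0 \<le> z" "z ^ 2 = P ^ 2 + 8"
  shows "P = 1 \<and> z = 3"
proof -
  have "P < z"
    using assms power_less_imp_less_base[of P 2 z] by simp
  moreover have "z \<noteq> P + 1"
  proof
    assume "z = P + 1"
    then have "2 * P + 1 = 8"
      using assms by (simp add: algebra_simps power2_eq_square)
    then show False
      by presburger
  qed
  ultimately have "(P + 2) ^ 2 \<le> z ^ 2"
    using assms power_mono[of "P + 2" z 2] by simp
  then have "P = 1"
    using assms by (simp add: algebra_simps power2_eq_square)
  then show ?thesis
    using assms power2_eq_imp_eq[of z 3] by simp
qed

lemma lucasU_zero_even: "lucasU 0 (-1) (2 * m) = 0"
  by (induction m) (simp_all add: numeral_2_eq_2)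

context
  fixes P :: int
begin

abbreviation U :: "nat \<Rightarrow> int" where "U \<equiv> lucasU P (-1)"
abbreviation V :: "nat \<Rightarrow> int" where "V \<equiv> lucasV P (-1)"

lemma lucas_Suc:
  "2 * U (Suc j) = P * U j + V j \<and> 2 * V (Suc j) = P * V j + (P ^ 2 + 4) * U j"
proof (induction j rule: induct_nat_012)
  case (ge2 n)
  have "P * (2 * U (Suc (Suc n))) = P * (P * U (Suc n) + V (Suc n))"
    "P * (2 * V (Suc (Suc n))) = P * (P * V (Suc n) + (P ^ 2 + 4) * U (Suc n))"
    using ge2(2) by simp_all
  with ge2(1) show ?case
    by (simp only: lucasU.simps lucasV.simps) (simp add: algebra_simps)
qed (simp_all add: algebra_simps power2_eq_square)

lemma lucasV_sq_minus_lucasU_sq: "V j ^ 2 - (P ^ 2 + 4) * U j ^ 2 = 4 * (-1) ^ j"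
proof (induction j)
  case (Suc j)
  have "4 * (V (Suc j) ^ 2 - (P ^ 2 + 4) * U (Suc j) ^ 2)
      = (2 * V (Suc j)) ^ 2 - (P ^ 2 + 4) * (2 * U (Suc j)) ^ 2"
    by (simp add: algebra_simps power2_eq_square)
  also have "\<dots> = (P * V j + (P ^ 2 + 4) * U j) ^ 2 - (P ^ 2 + 4) * (P * U j + V j) ^ 2"
    using lucas_Suc[of j] by (simp only:)
  also have "\<dots> = -4 * (V j ^ 2 - (P ^ 2 + 4) * U j ^ 2)"
    by (simp add: algebra_simps power2_eq_square)
  finally show ?case
    using Suc by simp
qed simp

lemma lucasV_sq_minus_lucasU_sq_even: "V (2 * m) ^ 2 - (P ^ 2 + 4) * U (2 * m) ^ 2 = 4"
  using lucasV_sq_minus_lucasU_sq[of "2 * m"] by simp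

lemma lucas_add:
  "2 * U (a + b) = U a * V b + U b * V a \<and> 2 * V (a + b) = V a * V b + (P ^ 2 + 4) * U a * U b"
proof (induction b)
  case (Suc b)
  have "2 * (2 * U (Suc (a + b))) = P * (2 * U (a + b)) + 2 * V (a + b)"
    "2 * (2 * V (Suc (a + b))) = P * (2 * V (a + b)) + (P ^ 2 + 4) * (2 * U (a + b))"
    using lucas_Suc[of "a + b"] by (simp_all add: algebra_simps)
  moreover have
    "2 * (U a * V (Suc b) + U (Suc b) * V a) = U a * (2 * V (Suc b)) + (2 * U (Suc b)) * V a"
    "2 * (V a * V (Suc b) + (P ^ 2 + 4) * U a * U (Suc b))
      = V a * (2 * V (Suc b)) + (P ^ 2 + 4) * U a * (2 * U (Suc b))"
    by (simp_all add: algebra_simps)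
  ultimately show ?case
    using Suc.IH lucas_Suc[of b] by (simp add: algebra_simps)
qed simp

lemma lucasU_diff:
  assumes "b \<le> a"
  shows "2 * (-1) ^ b * U (a - b) = U a * V b - U b * V a"
proof -
  define c where "c = a - b"
  have "a = c + b"
    using assms by (simp add: c_def)
  have "2 * (U a * V b - U b * V a) = (2 * U a) * V b - U b * (2 * V a)"
    by simp
  also have "\<dots> = U c * (V b ^ 2 - (P ^ 2 + 4) * U b ^ 2)"
    using lucas_add[of c b] \<open>a = c + b\<close> by (simp add: algebra_simps power2_eq_square)
  finally have "2 * (U a * V b - U b * V a) = 2 * (2 * (-1) ^ b * U c)"
    unfolding lucasV_sq_minus_lucasU_sq by simp
  then show ?thesis
    unfolding c_def by simp
qed

lemma lucasU_diff_odd_even: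
  assumes "odd j"
  shows "2 * m \<le> j \<Longrightarrow> U j * V (2 * m) - U (2 * m) * V j = 2 * U (j - 2 * m)"
    and "j \<le> 2 * m \<Longrightarrow> U j * V (2 * m) - U (2 * m) * V j = 2 * U (2 * m - j)"
  using assms lucasU_diff[of "2 * m" j] lucasU_diff[of j "2 * m"] by simp_all

lemma lucas_uminus:
  "lucasU (-P) (-1) j = (-1) ^ Suc j * U j \<and> lucasV (-P) (-1) j = (-1) ^ j * V j"
  by (induction j rule: induct_nat_012) (auto simp: algebra_simps)

lemma lucasU_abs_odd:
  assumes "odd j"
  shows "lucasU \<bar>P\<bar> (-1) j = U j"
  using assms lucas_uminus[of j] by (cases "0 \<le> P") simp_all

lemma lucas_abs_even:
  assumes "even j"
  shows "lucasV \<bar>P\<bar> (-1) j = V j" "lucasU \<bar>P\<bar> (-1) j ^ 2 = U j ^ 2"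
  using assms lucas_uminus[of j] by (cases "0 \<le> P"; simp add: power_mult_distrib)+

lemma lucas_nonneg:
  assumes "0 \<le> P"
  shows "0 \<le> U j \<and> 0 \<le> V j"
  using assms by (induction j rule: induct_nat_012) auto

lemma lucasV_even_ge_2:
  assumes "0 \<le> P"
  shows "2 \<le> V (2 * m)"
proof -
  have "0 \<le> (P ^ 2 + 4) * U (2 * m) ^ 2"
    by simp
  then have "4 \<le> V (2 * m) ^ 2"
    using lucasV_sq_minus_lucasU_sq_even[of m] by linarith
  then show ?thesis
    using lucas_nonneg[OF assms] power2_le_imp_le[of 2 "V (2 * m)"] by simp
qed

lemma lucasV_even_eq_2:
  assumes "0 \<le> P" "U (2 * m) = 0"
  shows "V (2 * m) = 2"
proof -
  have "V (2 * m) ^ 2 = 2 ^ 2"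
    using assms(2) lucasV_sq_minus_lucasU_sq_even[of m] by simp
  then show ?thesis
    using lucas_nonneg[OF assms(1)] power2_eq_imp_eq[of "V (2 * m)" 2] by simp
qed

lemma pell_small_solutions_lucas:
  fixes z :: int and x :: nat
  assumes "1 \<le> P" "0 \<le> z" "x \<le> 1" "z ^ 2 - (P ^ 2 + 4) * int x ^ 2 \<in> {4, -4}"
  shows "\<exists>j. z = V j \<and> int x = U j"
proof (cases "x = 0")
  case True
  then have "z ^ 2 = 2 ^ 2"
    using assms(4) zero_le_power2[of z] by auto
  then have "z = V 0 \<and> int x = U 0"
    using assms(2) True power2_eq_imp_eq[of z 2] by simp
  then show ?thesis ..
next
  case False
  then have "x = 1"
    using assms(3) by simp
  then have "z ^ 2 = P ^ 2 \<or> z ^ 2 = P ^ 2 + 8"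
    using assms(4) by auto
  then have "z = V 1 \<and> int x = U 1 \<or> z = V 2 \<and> int x = U 2"
    using assms(1,2) \<open>x = 1\<close> sq_eq_sq_add_8[of P z] power2_eq_imp_eq[of z P]
    by (auto simp: numeral_2_eq_2)
  then show ?thesis
    by blast
qed

lemma pell_solutions_lucas:
  fixes z :: int and x :: nat
  assumes "1 \<le> P" "0 \<le> z" "z ^ 2 - (P ^ 2 + 4) * int x ^ 2 \<in> {4, -4}"
  shows "\<exists>j. z = V j \<and> int x = U j"
  using assms(2,3)
proof (induction x arbitrary: z rule: less_induct)
  case (less x)
  show ?case
  proof (cases "x \<le> 1")
    case True
    then show ?thesis
      using pell_small_solutions_lucas[OF assms(1)] less.prems by blast
  next
    case False
    then have "2 \<le> int x"
      by simp
    then obtain x' z' where "0 \<le> x'" "x' < int x" "0 \<le> z'"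
      and norm: "z' ^ 2 - (P ^ 2 + 4) * x' ^ 2 = - (z ^ 2 - (P ^ 2 + 4) * int x ^ 2)"
      and x: "2 * int x = P * x' + z'" and z: "2 * z = P * z' + (P ^ 2 + 4) * x'"
      using pell_descent[OF assms(1) less.prems(1) _ less.prems(2)] by blast
    have "nat x' < x"
      using \<open>x' < int x\<close> \<open>0 \<le> x'\<close> by simp
    moreover have "z' ^ 2 - (P ^ 2 + 4) * int (nat x') ^ 2 \<in> {4, -4}"
      using norm less.prems(2) \<open>0 \<le> x'\<close> by auto
    ultimately obtain j where j: "z' = V j" "x' = U j"
      using less.IH \<open>0 \<le> z'\<close> \<open>0 \<le> x'\<close> by force
    have "2 * int x = P * U j + V j" "2 * z = P * V j + (P ^ 2 + 4) * U j"
      using x z j by simp_all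
    then have "int x = U (Suc j) \<and> z = V (Suc j)"
      using lucas_Suc[of j] by (metis mult_cancel_left zero_neq_numeral)
    then show ?thesis
      by blast
  qed
qed

lemma pell_minus_four_lucas:
  fixes z :: int and x :: nat
  assumes "1 \<le> P" "z ^ 2 - (P ^ 2 + 4) * int x ^ 2 = -4"
  obtains j where "odd j" "\<bar>z\<bar> = V j" "int x = U j"
proof -
  obtain j where j: "\<bar>z\<bar> = V j" "int x = U j"
    using pell_solutions_lucas[OF assms(1) abs_ge_zero, of z x] assms(2) by auto
  then have "4 * (-1) ^ j = (-4 :: int)"
    using lucasV_sq_minus_lucasU_sq[of j] assms(2) by (metis power2_abs)
  then have "odd j"
    by (metis neg_one_even_power one_neq_neg_one mult_cancel_left1 mult_minus1_right zero_neq_numeral)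
  then show thesis
    using that j by blast
qed

lemma lucasU_partner:
  assumes "odd j" "\<bar>z\<bar> = V j" "2 * y = V (2 * m) * U j + U (2 * m) * z"
  shows "y = U (j + 2 * m) \<or> 2 * m \<le> j \<and> y = U (j - 2 * m)
    \<or> j \<le> 2 * m \<and> y = U (2 * m - j)"
proof (cases "0 \<le> z")
  case True
  then show ?thesis
    using assms(2,3) lucas_add[of j "2 * m"] by (simp add: algebra_simps)
next
  case False
  then have "z = - V j"
    using assms(2) by simp
  then have "2 * y = U j * V (2 * m) - U (2 * m) * V j"
    using assms(3) by (simp add: algebra_simps)
  then show ?thesis
    using lucasU_diff_odd_even[OF assms(1)] by (cases "2 * m \<le> j") auto
qed

lemma lucas_quadratic_solutions:
  fixes a b :: nat
  assumes P: "0 \<le> P" and "a < b"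
    and eq: "int a ^ 2 + int b ^ 2 = V (2 * m) * int a * int b - U (2 * m) ^ 2"
  shows "(\<exists>k. int a = U (2 * k + 1) \<and> int b = U (2 * k + 2 * m + 1)
            \<or> int b = U (2 * k + 1) \<and> int a = U (2 * k + 2 * m + 1))
       \<or> (\<exists>k. k \<le> m - 1 \<and> 1 \<le> m \<and> m \<noteq> 2 * k + 1
            \<and> int a = U (2 * k + 1) \<and> int b = U (2 * m - 2 * k - 1))"
proof -
  have "U (2 * m) \<noteq> 0"
  proof
    assume "U (2 * m) = 0"
    then have "(int b - int a) ^ 2 = 0"
      using eq lucasV_even_eq_2[OF P] by (simp add: algebra_simps power2_eq_square)
    then show False
      using \<open>a < b\<close> by simp
  qed
  then have "1 \<le> P"
    using P lucasU_zero_even[of m] by (cases "P = 0") auto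
  obtain z where z: "z ^ 2 - (P ^ 2 + 4) * int a ^ 2 = -4"
    and b: "2 * int b = V (2 * m) * int a + U (2 * m) * z"
    using pell_of_quadratic[OF lucasV_sq_minus_lucasU_sq_even \<open>U (2 * m) \<noteq> 0\<close> eq] by blast
  obtain j where "odd j" and j: "\<bar>z\<bar> = V j" "int a = U j"
    using pell_minus_four_lucas[OF \<open>1 \<le> P\<close> z] by blast
  from \<open>odd j\<close> obtain k where k: "j = 2 * k + 1"
    by (rule oddE)
  from lucasU_partner[OF \<open>odd j\<close> j(1), of "int b" m] consider
      "int b = U (j + 2 * m)" | "2 * m \<le> j" "int b = U (j - 2 * m)"
    | "j \<le> 2 * m" "int b = U (2 * m - j)"
    using b j(2) by auto
  then show ?thesis
  proof cases
    case 1
    then show ?thesis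
      using j k by (auto simp: algebra_simps)
  next
    case 2
    moreover have "j - 2 * m = 2 * (k - m) + 1" "j = 2 * (k - m) + 2 * m + 1"
      using 2 k by auto
    ultimately show ?thesis
      using j by auto
  next
    case 3
    have "m \<noteq> 2 * k + 1"
    proof
      assume "m = 2 * k + 1"
      then have "2 * m - j = j"
        using k by simp
      then show False
        using 3 j \<open>a < b\<close> by simp
    qed
    moreover have "k \<le> m - 1" "1 \<le> m" "2 * m - j = 2 * m - 2 * k - 1"
      using 3 k by auto
    ultimately show ?thesis
      using 3 j k by (intro disjI2 exI[of _ k]) simp
  qed
qed

lemma large_solution_lucas_form:
  fixes m n :: nat
  assumes P: "0 \<le> P"
    and sigma: "int (divisor_sigma 2 n) - int n ^ 2 = V (2 * m) * int n - U (2 * m) ^ 2 + 1"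
    and large: "int n > (\<bar>V (2 * m)\<bar> + U (2 * m) ^ 2 - 1) ^ 3"
  shows "(\<exists>k. int n = U (2 * k + 1) * U (2 * k + 2 * m + 1)
            \<and> prime (U (2 * k + 1)) \<and> prime (U (2 * k + 2 * m + 1)))
       \<or> (\<exists>k. k \<le> m - 1 \<and> m \<ge> 1 \<and> m \<noteq> 2 * k + 1
            \<and> int n = U (2 * k + 1) * U (2 * m - 2 * k - 1)
            \<and> prime (U (2 * k + 1)) \<and> prime (U (2 * m - 2 * k - 1)))"
proof -
  have "2 \<le> V (2 * m)"
    using P by (rule lucasV_even_ge_2)
  then obtain p q where "prime p" "prime q" "p < q" and n: "n = p * q"
    using semiprime_of_divisor_sigma_2_eq[of "V (2 * m)" "U (2 * m)" n] sigma large
      lucasV_even_eq_2[OF P] by auto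
  then have "int p ^ 2 + int q ^ 2 = V (2 * m) * int p * int q - U (2 * m) ^ 2"
    using sigma divisor_sigma_prime_mult[of p q 2] by (simp add: algebra_simps)
  moreover have "prime (int p)" "prime (int q)" "int n = int p * int q"
    using \<open>prime p\<close> \<open>prime q\<close> n by simp_all
  ultimately show ?thesis
    using lucas_quadratic_solutions[OF P \<open>p < q\<close>] by (metis mult.commute)
qed

end

theorem theorem1p3:
  fixes P :: int and m n :: nat
  assumes "n > 0"
    and "int (divisor_sigma 2 n) - int n ^ 2
           = lucasV P (-1) (2*m) * int n - (lucasU P (-1) (2*m))^2 + 1"
    and "int n > (\<bar>lucasV P (-1) (2*m)\<bar> + (lucasU P (-1) (2*m))^2 - 1) ^ 3"
  shows "(\<exists>k::nat. int n = lucasU P (-1) (2*k+1) * lucasU P (-1) (2*k+2*m+1)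
            \<and> prime (lucasU P (-1) (2*k+1)) \<and> prime (lucasU P (-1) (2*k+2*m+1)))
       \<or> (\<exists>k::nat. k \<le> m - 1 \<and> m \<ge> 1 \<and> m \<noteq> 2*k+1
            \<and> int n = lucasU P (-1) (2*k+1) * lucasU P (-1) (2*m-2*k-1)
            \<and> prime (lucasU P (-1) (2*k+1)) \<and> prime (lucasU P (-1) (2*m-2*k-1)))"
proof -
  \<comment> \<open>The hypothesis \<open>n > 0\<close> is implied by the size bound.\<close>
  have "int (divisor_sigma 2 n) - int n ^ 2
      = lucasV (\<bar>P\<bar>) (-1) (2 * m) * int n - lucasU (\<bar>P\<bar>) (-1) (2 * m) ^ 2 + 1"
    "(\<bar>lucasV (\<bar>P\<bar>) (-1) (2 * m)\<bar> + lucasU (\<bar>P\<bar>) (-1) (2 * m) ^ 2 - 1) ^ 3 < int n"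
    using assms(2,3) by (simp_all add: lucas_abs_even)
  from large_solution_lucas_form[OF abs_ge_zero this] show ?thesis
    by (auto simp: lucasU_abs_odd)
qed

end
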